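(* Let $\mathbf R=\{R_i,t_i\}_{i\ge0}$ be a preperfectoid tower arising from a pair $(R,I_0)$ such that every $R_i$ is $I_0$-adically separated (i.e. $\bigcap_n I_0^nR_i=0$). Then every $t_i$ is injective and every $R_i$ is reduced.
   Context: Fix a prime $p$; rings are commutative with $1$. For a ring $A$, an ideal $I$ and an $A$-module $M$, $M_{I\text{-tor}}$ is the submodule of $x\in M$ such that for every $a\in I$ some $a^nx=0$; $\varphi_{I,A}\colon A_{I\text{-tor}}\to A/IA$ is inclusion followed by projection. $\varphi$ is absolute Frobenius. A tower of rings $\{R_i,t_i\}_{i\ge0}$ is a sequence of ring maps $R_0\xrightarrow{t_0}R_1\to\cdots$. For a ring $R$ and ideal $I_0$, write $\overline{R_i}=R_i/I_0R_i$, $\overline{t_i}$ the induced maps. A purely inseparable tower arising from $(R,I_0)$: (a) $R_0=R$, $p\in I_0$; (b) each $\overline{t_i}$ injective; (c) $\varphi(\overline{R_{i+1}})\subset\overline{t_i}(\overline{R_i})$; then $F_i\colon\overline{R_{i+1}}\to\overline{R_i}$ is the unique ring map with $\overline{t_i}\circ F_i=\varphi$. A preperfectoid tower is a purely inseparable tower with: (d) each $F_i$ surjective; (f) $I_0$ principal and a principal ideal $I_1\subset R_1$ with $I_1^p=I_0R_1$ and $\ker F_i=I_1\overline{R_{i+1}}$ for all $i$; (g) for all $i$, $I_0(R_i)_{I_0\text{-tor}}=0$ and a bijection $(F_i)_{\mathrm{tor}}\colon(R_{i+1})_{I_0\text{-tor}}\to(R_i)_{I_0\text{-tor}}$ with $\varphi_{I_0,R_i}\circ(F_i)_{\mathrm{tor}}=F_i\circ\varphi_{I_0,R_{i+1}}$.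 *)

theory Defs
  imports "HOL-Algebra.Algebra" "HOL-Algebra.Ideal_Product"
begin

text \<open>A tower R 0 -> R 1 -> ... is encoded by a family of rings R :: nat => 'a ring
  (all carriers inside one ambient type 'a) and maps t i : R i -> R (Suc i).\<close>

fun tcomp :: "(nat \<Rightarrow> 'a \<Rightarrow> 'a) \<Rightarrow> nat \<Rightarrow> nat \<Rightarrow> 'a \<Rightarrow> 'a" where
  "tcomp t j 0 = (\<lambda>x. x)"
| "tcomp t j (Suc n) = t (j + n) \<circ> tcomp t j n"

fun idl_pow :: "('a, 'b) ring_scheme \<Rightarrow> 'a set \<Rightarrow> nat \<Rightarrow> 'a set" where
  "idl_pow R I 0 = carrier R"
| "idl_pow R I (Suc n) = I \<cdot>\<^bsub>R\<^esub> idl_pow R I n"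

definition ext0 :: "(nat \<Rightarrow> 'a ring) \<Rightarrow> (nat \<Rightarrow> 'a \<Rightarrow> 'a) \<Rightarrow> 'a set \<Rightarrow> nat \<Rightarrow> 'a set" where
  "ext0 R t I i = Idl\<^bsub>R i\<^esub> (tcomp t 0 i ` I)"

definition ext1 :: "(nat \<Rightarrow> 'a ring) \<Rightarrow> (nat \<Rightarrow> 'a \<Rightarrow> 'a) \<Rightarrow> 'a set \<Rightarrow> nat \<Rightarrow> 'a set" where
  "ext1 R t I i = Idl\<^bsub>R (Suc i)\<^esub> (tcomp t 1 i ` I)"

definition tor :: "('a, 'b) ring_scheme \<Rightarrow> 'a set \<Rightarrow> 'a set" where
  "tor A I = {x \<in> carrier A. \<forall>a\<in>I. \<exists>n::nat. a [^]\<^bsub>A\<^esub> n \<otimes>\<^bsub>A\<^esub> x = \<zero>\<^bsub>A\<^esub>}"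

text \<open>frob_rel p R t I0 i y x means F_i(class of y) = class of x, i.e.
  t_i(x) = y^p in R_{i+1}/I_0R_{i+1}.  (Since the induced maps on quotients are
  injective, this is exactly the graph of the map F_i.)\<close>
definition frob_rel :: "nat \<Rightarrow> (nat \<Rightarrow> 'a ring) \<Rightarrow> (nat \<Rightarrow> 'a \<Rightarrow> 'a) \<Rightarrow> 'a set \<Rightarrow> nat \<Rightarrow> 'a \<Rightarrow> 'a \<Rightarrow> bool" where
  "frob_rel p R t I0 i y x \<longleftrightarrow>
     t i x \<ominus>\<^bsub>R (Suc i)\<^esub> (y [^]\<^bsub>R (Suc i)\<^esub> p) \<in> ext0 R t I0 (Suc i)"

definition purely_inseparable_tower ::
  "nat \<Rightarrow> (nat \<Rightarrow> 'a ring) \<Rightarrow> (nat \<Rightarrow> 'a \<Rightarrow> 'a) \<Rightarrow> 'a set \<Rightarrow> bool" where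
  "purely_inseparable_tower p R t I0 \<longleftrightarrow>
     Factorial_Ring.prime p \<and>
     (\<forall>i. cring (R i)) \<and>
     (\<forall>i. t i \<in> ring_hom (R i) (R (Suc i))) \<and>
     ideal I0 (R 0) \<and>
     [p] \<cdot>\<^bsub>R 0\<^esub> \<one>\<^bsub>R 0\<^esub> \<in> I0 \<and>
     \<comment> \<open>(b) the induced maps R_i/I_0R_i -> R_{i+1}/I_0R_{i+1} are injective\<close>
     (\<forall>i. \<forall>x\<in>carrier (R i). t i x \<in> ext0 R t I0 (Suc i) \<longrightarrow> x \<in> ext0 R t I0 i) \<and>
     \<comment> \<open>(c) Frobenius of R_{i+1}/I_0 lands in the image of R_i/I_0\<close>
     (\<forall>i. \<forall>y\<in>carrier (R (Suc i)). \<exists>x\<in>carrier (R i). frob_rel p R t I0 i y x)"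

definition preperfectoid_tower ::
  "nat \<Rightarrow> (nat \<Rightarrow> 'a ring) \<Rightarrow> (nat \<Rightarrow> 'a \<Rightarrow> 'a) \<Rightarrow> 'a set \<Rightarrow> bool" where
  "preperfectoid_tower p R t I0 \<longleftrightarrow>
     purely_inseparable_tower p R t I0 \<and>
     \<comment> \<open>(d) each F_i is surjective\<close>
     (\<forall>i. \<forall>x\<in>carrier (R i). \<exists>y\<in>carrier (R (Suc i)). frob_rel p R t I0 i y x) \<and>
     \<comment> \<open>(f)\<close>
     (\<exists>f\<in>carrier (R 0). I0 = PIdl\<^bsub>R 0\<^esub> f) \<and>
     (\<exists>I1. (\<exists>g\<in>carrier (R 1). I1 = PIdl\<^bsub>R 1\<^esub> g) \<and>
           idl_pow (R 1) I1 p = ext0 R t I0 1 \<and>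
           (\<forall>i. \<forall>y\<in>carrier (R (Suc i)).
              frob_rel p R t I0 i y \<zero>\<^bsub>R i\<^esub> \<longleftrightarrow>
              y \<in> ext1 R t I1 i <+>\<^bsub>R (Suc i)\<^esub> ext0 R t I0 (Suc i))) \<and>
     \<comment> \<open>(g)\<close>
     (\<forall>i. \<forall>a\<in>I0. \<forall>x\<in>tor (R i) (ext0 R t I0 i).
        tcomp t 0 i a \<otimes>\<^bsub>R i\<^esub> x = \<zero>\<^bsub>R i\<^esub>) \<and>
     (\<exists>Ftor. \<forall>i.
        bij_betw (Ftor i) (tor (R (Suc i)) (ext0 R t I0 (Suc i))) (tor (R i) (ext0 R t I0 i)) \<and>
        (\<forall>y\<in>tor (R (Suc i)) (ext0 R t I0 (Suc i)). frob_rel p R t I0 i y (Ftor i y)))"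

end

theory Submission
  imports Defs "HOL-Computational_Algebra.Primes"
begin

(* Write I0 = (f) and I1 = (g), and let F i, G i be the images of f in R i and of g in R (i+1).
   By (g), the I0-torsion of R i is the annihilator of F i; it meets (F i) trivially, so the
   torsion part of the Frobenius is an honest p-th power map, and p kills torsion, so the
   freshman's dream holds for torsion summands. Together with ker F_i = I1 this shows that G i
   kills the torsion of R (i+1) and that congruences to torsion elements descend along the
   tower: if t i z is congruent to a torsion element modulo F (i+1), then z is congruent to a
   torsion element modulo F i. For z in ker (t i) this gives ker (t i) = F i * ker (t i), hence
   ker (t i) lies in the intersection of all (F i ^ n), which is 0. Likewise x ^ p = 0 in R (i+1)
   forces x into every (G i ^ n), hence into every (F (i+1) ^ n), so x = 0; reducedness of R i
   follows by applying the injective map t i. *)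

section \<open>Commutative rings: principal ideals, binomial expansion, torsion\<close>

lemma mem_cgenideal_iff: "x \<in> PIdl\<^bsub>A\<^esub> a \<longleftrightarrow> (\<exists>c\<in>carrier A. x = c \<otimes>\<^bsub>A\<^esub> a)"
  by (auto simp: cgenideal_def)

lemma ring_hom_mem_cgenideal:
  assumes "h \<in> ring_hom A B" "a \<in> carrier A" "x \<in> PIdl\<^bsub>A\<^esub> a"
  shows "h x \<in> PIdl\<^bsub>B\<^esub> (h a)"
  using assms ring_hom_mult[OF assms(1)] ring_hom_closed[OF assms(1)]
  by (fastforce simp: mem_cgenideal_iff)

context cring
begin

lemma cgenideal_eq_imp_dvd:
  assumes "a \<in> carrier R" "b \<in> carrier R" "PIdl a = PIdl b"
  shows "\<exists>c\<in>carrier R. a = c \<otimes> b"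
  using assms cgenideal_self[of a] by (auto simp: mem_cgenideal_iff)

lemma diff_mem_cgenideal_iff:
  assumes "x \<in> carrier R" "y \<in> carrier R" "a \<in> carrier R"
  shows "x \<ominus> y \<in> PIdl a \<longleftrightarrow> (\<exists>c\<in>carrier R. x = y \<oplus> c \<otimes> a)"
proof
  assume "x \<ominus> y \<in> PIdl a"
  then obtain c where c: "c \<in> carrier R" "x \<ominus> y = c \<otimes> a"
    by (auto simp: mem_cgenideal_iff)
  have "x = y \<oplus> (x \<ominus> y)" using assms by algebra
  also have "\<dots> = y \<oplus> c \<otimes> a" by (simp only: c(2))
  finally show "\<exists>c\<in>carrier R. x = y \<oplus> c \<otimes> a" using c(1) by blast
next
  assume "\<exists>c\<in>carrier R. x = y \<oplus> c \<otimes> a"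
  then obtain c where c: "c \<in> carrier R" "x = y \<oplus> c \<otimes> a" by blast
  then have "x \<ominus> y = c \<otimes> a" using assms by algebra
  then show "x \<ominus> y \<in> PIdl a" using c by (auto simp: mem_cgenideal_iff)
qed

lemma nat_pow_add_binomial:
  assumes a: "a \<in> carrier R" and b: "b \<in> carrier R"
  shows "(a \<oplus> b) [^] (n::nat) = (\<Oplus>k\<in>{..n}. add_pow R (n choose k) (a [^] k \<otimes> b [^] (n - k)))"
proof (induction n)
  case 0
  then show ?case using a b by simp
next
  case (Suc n)
  define T where "T m k = add_pow R (m choose k) (a [^] k \<otimes> b [^] (m - k))" for m k
  have T_carrier: "T m k \<in> carrier R" for m k using a b by (simp add: T_def)
  have T_a: "T n k \<otimes> a = add_pow R (n choose k) (a [^] Suc k \<otimes> b [^] (n - k))" for k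
    unfolding T_def using a b by (simp add: add_pow_ldistr add_pow_rdistr m_assoc m_comm m_lcomm)
  have T_b: "T n k \<otimes> b = add_pow R (n choose k) (a [^] k \<otimes> b [^] (Suc n - k))" if "k \<le> n" for k
    unfolding T_def using a b that by (simp add: add_pow_ldistr m_assoc Suc_diff_le)
  have "(a \<oplus> b) [^] Suc n = (\<Oplus>k\<in>{..n}. T n k \<otimes> a) \<oplus> (\<Oplus>k\<in>{..n}. T n k \<otimes> b)"
    using Suc a b T_carrier by (simp add: T_def r_distr finsum_ldistr)
  also have "(\<Oplus>k\<in>{..n}. T n k \<otimes> b)
      = (\<Oplus>k\<in>{..n}. add_pow R (n choose Suc k) (a [^] Suc k \<otimes> b [^] (n - k))) \<oplus> T (Suc n) 0"
  proof -
    define U where "U k = add_pow R (n choose k) (a [^] k \<otimes> b [^] (Suc n - k))" for k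
    have U_carrier: "U k \<in> carrier R" for k using a b by (simp add: U_def)
    have "(\<Oplus>k\<in>{..n}. T n k \<otimes> b) = (\<Oplus>k\<in>{..n}. U k)"
      using T_b U_carrier by (intro finsum_cong') (auto simp: U_def)
    also have "\<dots> = (\<Oplus>k\<in>{..Suc n}. U k)"
      using U_carrier by (simp add: U_def binomial_eq_0)
    also have "\<dots> = (\<Oplus>k\<in>{..n}. U (Suc k)) \<oplus> U 0"
      by (rule finsum_Suc2) (auto simp: U_carrier)
    finally show ?thesis by (simp add: U_def T_def)
  qed
  also have "(\<Oplus>k\<in>{..n}. T n k \<otimes> a) = (\<Oplus>k\<in>{..n}. add_pow R (n choose k) (a [^] Suc k \<otimes> b [^] (n - k)))"
    using a b by (intro finsum_cong') (auto simp: T_a)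
  also have "(\<Oplus>k\<in>{..n}. add_pow R (n choose k) (a [^] Suc k \<otimes> b [^] (n - k)))
      \<oplus> ((\<Oplus>k\<in>{..n}. add_pow R (n choose Suc k) (a [^] Suc k \<otimes> b [^] (n - k))) \<oplus> T (Suc n) 0)
      = (\<Oplus>k\<in>{..n}. T (Suc n) (Suc k)) \<oplus> T (Suc n) 0"
    using a b T_carrier
    by (simp add: T_def finsum_addf[symmetric] add.nat_pow_mult a_assoc[symmetric] del: finsum_Suc)
  also have "\<dots> = (\<Oplus>k\<in>{..Suc n}. T (Suc n) k)"
    by (rule finsum_Suc2[symmetric]) (auto simp: T_carrier)
  finally show ?case by (simp add: T_def)
qed

lemma nat_pow_add_prime:
  assumes p: "Factorial_Ring.prime (p::nat)" and a: "a \<in> carrier R" and v: "v \<in> carrier R"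
    and char: "add_pow R p v = \<zero>"
  shows "(a \<oplus> v) [^] p = a [^] p \<oplus> v [^] p"
proof -
  define T where "T k = add_pow R (p choose k) (a [^] k \<otimes> v [^] (p - k))" for k
  have T_carrier: "T k \<in> carrier R" for k using a v by (simp add: T_def)
  obtain r where r: "p = Suc (Suc r)"
    using prime_ge_2_nat[OF p] by (metis add_2_eq_Suc le_Suc_ex)
  have T_middle: "T (Suc k) = \<zero>" if "k \<le> r" for k
  proof -
    have "p dvd (p choose Suc k)"
      using p r that by (intro dvd_choose_prime) auto
    then obtain m where m: "p choose Suc k = p * m" ..
    have "v [^] (p - Suc k) = v [^] (p - Suc (Suc k)) \<otimes> v"
      using that r v by (simp add: Suc_diff_le)
    then have "T (Suc k) = (a [^] Suc k \<otimes> v [^] (p - Suc (Suc k))) \<otimes> add_pow R m (add_pow R p v)"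
      unfolding T_def m using a v by (simp add: m_assoc add_pow_rdistr add.nat_pow_pow)
    then show ?thesis using a v char by simp
  qed
  have "(a \<oplus> v) [^] p = (\<Oplus>k\<in>{..Suc (Suc r)}. T k)"
    using nat_pow_add_binomial[OF a v, of p] r by (simp add: T_def)
  also have "\<dots> = T (Suc (Suc r)) \<oplus> (\<Oplus>k\<in>{..Suc r}. T k)"
    using T_carrier by simp
  also have "(\<Oplus>k\<in>{..Suc r}. T k) = (\<Oplus>k\<in>{..r}. T (Suc k)) \<oplus> T 0"
    by (rule finsum_Suc2) (auto simp: T_carrier)
  also have "(\<Oplus>k\<in>{..r}. T (Suc k)) = (\<Oplus>k\<in>{..r}. \<zero>)"
    by (rule finsum_cong') (auto simp: T_middle)
  finally show ?thesis using a v r by (simp add: T_def)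
qed

lemma nat_pow_add_orthogonal:
  assumes x: "x \<in> carrier R" and y: "y \<in> carrier R" and xy: "x \<otimes> y = \<zero>"
  shows "(x \<oplus> y) [^] Suc n = x [^] Suc n \<oplus> y [^] Suc n"
proof (induction n)
  case 0
  then show ?case using x y by simp
next
  case (Suc n)
  have "(x \<oplus> y) [^] Suc (Suc n) = (x [^] n \<otimes> x \<oplus> y [^] n \<otimes> y) \<otimes> (x \<oplus> y)"
    using Suc x y by (simp del: nat_pow_Suc add: nat_pow_Suc[of _ "Suc n"])
  also have "\<dots> = x [^] n \<otimes> x \<otimes> x \<oplus> y [^] n \<otimes> y \<otimes> y \<oplus> (x [^] n \<otimes> (x \<otimes> y) \<oplus> y [^] n \<otimes> (x \<otimes> y))"
    using x y nat_pow_closed[OF x, of n] nat_pow_closed[OF y, of n] by algebra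
  finally show ?case using x y xy by simp
qed

lemma add_pow_eq_zero_if_annihilated:
  assumes "add_pow R (n::nat) \<one> \<in> PIdl a" and "a \<in> carrier R" "v \<in> carrier R" "a \<otimes> v = \<zero>"
  shows "add_pow R n v = \<zero>"
proof -
  obtain c where c: "c \<in> carrier R" "add_pow R n \<one> = c \<otimes> a"
    using assms(1) by (auto simp: mem_cgenideal_iff)
  have "add_pow R n v = add_pow R n \<one> \<otimes> v"
    using add_pow_ldistr[of \<one> v n] assms by simp
  also have "\<dots> = c \<otimes> (a \<otimes> v)"
    using c assms by (simp add: m_assoc)
  finally show ?thesis using assms c by simp
qed

lemma ideal_diff_trans:
  assumes "ideal I R" "x \<in> carrier R" "y \<in> carrier R" "z \<in> carrier R"
    and "x \<ominus> y \<in> I" "y \<ominus> z \<in> I"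
  shows "x \<ominus> z \<in> I"
proof -
  have "x \<ominus> z = (x \<ominus> y) \<oplus> (y \<ominus> z)"
    using assms(2-4) by algebra
  then show ?thesis
    using assms(5,6) additive_subgroup.a_closed[OF ideal.axioms(1)[OF assms(1)]] by simp
qed

lemma ideal_diff_sym:
  assumes "ideal I R" "x \<in> carrier R" "y \<in> carrier R" "x \<ominus> y \<in> I"
  shows "y \<ominus> x \<in> I"
proof -
  have "y \<ominus> x = \<ominus> (x \<ominus> y)"
    using assms(2,3) by algebra
  then show ?thesis
    using assms(4) additive_subgroup.a_inv_closed[OF ideal.axioms(1)[OF assms(1)]] by simp
qed

lemma cgenideal_pow_subset:
  assumes "a \<in> carrier R"
  shows "PIdl (a [^] Suc n) \<subseteq> PIdl a"
  using assms by (intro cgenideal_minimal[OF cgenideal_ideal]) (auto simp: mem_cgenideal_iff)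

lemma set_add_cgenideal_subset:
  assumes "a \<in> carrier R" "PIdl b \<subseteq> PIdl a"
  shows "PIdl a <+> PIdl b \<subseteq> PIdl a"
proof -
  interpret ideal "PIdl a" R by (rule cgenideal_ideal[OF assms(1)])
  show ?thesis
    using assms(2) unfolding set_add_def' by (auto intro: a_closed)
qed

end

lemma ring_hom_add_pow:
  assumes "ring A" "ring B" "h \<in> ring_hom A B" "x \<in> carrier A"
  shows "h (add_pow A (n::nat) x) = add_pow B n (h x)"
proof (induction n)
  interpret A: ring A by (rule assms(1))
  interpret B: ring B by (rule assms(2))
  case 0
  then show ?case using ring_hom_zero[OF assms(3,1,2)] by simp
next
  interpret A: ring A by (rule assms(1))
  interpret B: ring B by (rule assms(2))
  case (Suc n)
  show ?case
    using Suc assms(4) ring_hom_add[OF assms(3)] by (simp add: A.add.nat_pow_Suc B.add.nat_pow_Suc)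
qed

lemma genideal_image_cgenideal:
  assumes A: "cring A" and B: "cring B" and h: "h \<in> ring_hom A B" and a: "a \<in> carrier A"
  shows "Idl\<^bsub>B\<^esub> (h ` (PIdl\<^bsub>A\<^esub> a)) = PIdl\<^bsub>B\<^esub> (h a)"
proof -
  interpret A: cring A by (rule A)
  interpret B: cring B by (rule B)
  have ha: "h a \<in> carrier B" using h a by (rule ring_hom_closed)
  have image: "h ` (PIdl\<^bsub>A\<^esub> a) \<subseteq> PIdl\<^bsub>B\<^esub> (h a)"
    using ring_hom_mem_cgenideal[OF h a] by blast
  then have "h ` (PIdl\<^bsub>A\<^esub> a) \<subseteq> carrier B"
    using ideal.Icarr[OF B.cgenideal_ideal[OF ha]] by blast
  moreover have "h a \<in> h ` (PIdl\<^bsub>A\<^esub> a)"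
    using A.cgenideal_self[OF a] by blast
  ultimately have "PIdl\<^bsub>B\<^esub> (h a) \<subseteq> Idl\<^bsub>B\<^esub> (h ` (PIdl\<^bsub>A\<^esub> a))"
    using B.cgenideal_minimal[OF B.genideal_ideal] B.genideal_self by blast
  then show ?thesis
    using B.genideal_minimal[OF B.cgenideal_ideal[OF ha] image] by blast
qed

lemma idl_pow_cgenideal:
  assumes "cring A" "a \<in> carrier A"
  shows "idl_pow A (PIdl\<^bsub>A\<^esub> a) n = PIdl\<^bsub>A\<^esub> (a [^]\<^bsub>A\<^esub> (n::nat))"
proof (induction n)
  interpret cring A by (rule assms(1))
  case 0
  show ?case by (auto simp: mem_cgenideal_iff intro: bexI[of _ "\<one>\<^bsub>A\<^esub>"])
next
  interpret cring A by (rule assms(1))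
  case (Suc n)
  have an: "a [^]\<^bsub>A\<^esub> n \<in> carrier A" using assms(2) by simp
  have "idl_pow A (PIdl\<^bsub>A\<^esub> a) (Suc n) = Idl\<^bsub>A\<^esub> (PIdl\<^bsub>A\<^esub> (a \<otimes>\<^bsub>A\<^esub> a [^]\<^bsub>A\<^esub> n))"
    using Suc ideal_prod_eq_genideal[OF cgenideal_ideal[OF assms(2)] cgenideal_ideal[OF an]]
      cgenideal_prod[OF assms(2) an] by simp
  also have "\<dots> = PIdl\<^bsub>A\<^esub> (a \<otimes>\<^bsub>A\<^esub> a [^]\<^bsub>A\<^esub> n)"
  proof -
    have I: "ideal (PIdl\<^bsub>A\<^esub> (a \<otimes>\<^bsub>A\<^esub> a [^]\<^bsub>A\<^esub> n)) A"
      using assms(2) an by (simp add: cgenideal_ideal)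
    then show ?thesis
      using genideal_minimal[OF I] genideal_self[of "PIdl\<^bsub>A\<^esub> (a \<otimes>\<^bsub>A\<^esub> a [^]\<^bsub>A\<^esub> n)"]
        ideal.Icarr[OF I] by blast
  qed
  finally show ?case
    using assms(2) by (simp add: m_comm)
qed

lemma (in cring) tor_cgenideal_pow:
  assumes "a \<in> carrier R" "x \<in> carrier R" "a [^] (n::nat) \<otimes> x = \<zero>"
  shows "x \<in> tor R (PIdl a)"
proof -
  have "b [^] n \<otimes> x = \<zero>" if b: "b \<in> PIdl a" for b
  proof -
    obtain c where "c \<in> carrier R" "b = c \<otimes> a"
      using b by (auto simp: mem_cgenideal_iff)
    then have "b [^] n \<otimes> x = c [^] n \<otimes> (a [^] n \<otimes> x)"
      using assms by (simp add: nat_pow_distrib m_assoc)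
    then show ?thesis using assms \<open>c \<in> carrier R\<close> by simp
  qed
  then show ?thesis using assms(2) by (auto simp: tor_def)
qed

lemma (in cring) tor_cgenideal_eq:
  assumes "a \<in> carrier R" and "\<And>x. x \<in> tor R (PIdl a) \<Longrightarrow> a \<otimes> x = \<zero>"
  shows "tor R (PIdl a) = {x \<in> carrier R. a \<otimes> x = \<zero>}"
  using assms tor_cgenideal_pow[OF assms(1), of _ 1] by (auto simp: tor_def)

section \<open>Principal preperfectoid towers\<close>

(* F i and G i generate I0 R_i and I1 R_(i+1); a congruence modulo (F i) stands for equality in
   R_i / I0 R_i. Ftor i is the torsion part (F_i)_tor of the Frobenius, and torsion_killed_by_F
   is condition (g) in elementwise form. *)
locale principal_preperfectoid_tower =
  fixes p :: nat and R :: "nat \<Rightarrow> 'a ring" and t :: "nat \<Rightarrow> 'a \<Rightarrow> 'a"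
    and F :: "nat \<Rightarrow> 'a" and G :: "nat \<Rightarrow> 'a" and Ftor :: "nat \<Rightarrow> 'a \<Rightarrow> 'a"
  assumes prime: "Factorial_Ring.prime p"
    and R_cring: "cring (R i)"
    and t_hom: "t i \<in> ring_hom (R i) (R (Suc i))"
    and F_carrier: "F i \<in> carrier (R i)"
    and G_carrier: "G i \<in> carrier (R (Suc i))"
    and t_F: "t i (F i) = F (Suc i)"
    and t_G: "t (Suc i) (G i) = G (Suc i)"
    and char_in_F: "add_pow (R i) p \<one>\<^bsub>R i\<^esub> \<in> PIdl\<^bsub>R i\<^esub> (F i)"
    and G_pow: "PIdl\<^bsub>R (Suc i)\<^esub> (G i [^]\<^bsub>R (Suc i)\<^esub> p) = PIdl\<^bsub>R (Suc i)\<^esub> (F (Suc i))"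
    and quotient_inj: "\<lbrakk>x \<in> carrier (R i); t i x \<in> PIdl\<^bsub>R (Suc i)\<^esub> (F (Suc i))\<rbrakk>
      \<Longrightarrow> x \<in> PIdl\<^bsub>R i\<^esub> (F i)"
    and frobenius_surj: "x \<in> carrier (R i) \<Longrightarrow> \<exists>y\<in>carrier (R (Suc i)).
      t i x \<ominus>\<^bsub>R (Suc i)\<^esub> y [^]\<^bsub>R (Suc i)\<^esub> p \<in> PIdl\<^bsub>R (Suc i)\<^esub> (F (Suc i))"
    and frobenius_kernel: "\<lbrakk>y \<in> carrier (R (Suc i)); y [^]\<^bsub>R (Suc i)\<^esub> p \<in> PIdl\<^bsub>R (Suc i)\<^esub> (F (Suc i))\<rbrakk>
      \<Longrightarrow> y \<in> PIdl\<^bsub>R (Suc i)\<^esub> (G i) <+>\<^bsub>R (Suc i)\<^esub> PIdl\<^bsub>R (Suc i)\<^esub> (F (Suc i))"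
    and torsion_killed_by_F: "\<lbrakk>x \<in> carrier (R i); F i [^]\<^bsub>R i\<^esub> (n::nat) \<otimes>\<^bsub>R i\<^esub> x = \<zero>\<^bsub>R i\<^esub>\<rbrakk>
      \<Longrightarrow> F i \<otimes>\<^bsub>R i\<^esub> x = \<zero>\<^bsub>R i\<^esub>"
    and Ftor_bij: "bij_betw (Ftor i)
      {y \<in> carrier (R (Suc i)). F (Suc i) \<otimes>\<^bsub>R (Suc i)\<^esub> y = \<zero>\<^bsub>R (Suc i)\<^esub>}
      {x \<in> carrier (R i). F i \<otimes>\<^bsub>R i\<^esub> x = \<zero>\<^bsub>R i\<^esub>}"
    and Ftor_frobenius: "\<lbrakk>y \<in> carrier (R (Suc i)); F (Suc i) \<otimes>\<^bsub>R (Suc i)\<^esub> y = \<zero>\<^bsub>R (Suc i)\<^esub>\<rbrakk>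
      \<Longrightarrow> t i (Ftor i y) \<ominus>\<^bsub>R (Suc i)\<^esub> y [^]\<^bsub>R (Suc i)\<^esub> p \<in> PIdl\<^bsub>R (Suc i)\<^esub> (F (Suc i))"
begin

definition torsion :: "nat \<Rightarrow> 'a set" where
  "torsion i = {x \<in> carrier (R i). F i \<otimes>\<^bsub>R i\<^esub> x = \<zero>\<^bsub>R i\<^esub>}"

definition separated :: "nat \<Rightarrow> bool" where
  "separated i \<longleftrightarrow> (\<Inter>n. PIdl\<^bsub>R i\<^esub> (F i [^]\<^bsub>R i\<^esub> (n::nat))) = {\<zero>\<^bsub>R i\<^esub>}"

lemma mem_torsion_iff [simp]: "x \<in> torsion i \<longleftrightarrow> x \<in> carrier (R i) \<and> F i \<otimes>\<^bsub>R i\<^esub> x = \<zero>\<^bsub>R i\<^esub>"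
  by (simp add: torsion_def)

lemma Ftor_bij_torsion: "bij_betw (Ftor i) (torsion (Suc i)) (torsion i)"
  using Ftor_bij by (simp add: torsion_def)

lemma p_ge_2: "p \<ge> 2"
  using prime prime_ge_2_nat by blast

lemma t_ring_hom_cring: "ring_hom_cring (R i) (R (Suc i)) (t i)"
  using R_cring t_hom by (simp add: ring_hom_cring_def ring_hom_cring_axioms_def)

lemma F_ideal: "ideal (PIdl\<^bsub>R i\<^esub> (F i)) (R i)"
  using cring.cgenideal_ideal[OF R_cring F_carrier] .

lemma t_mem_F:
  assumes "x \<in> PIdl\<^bsub>R i\<^esub> (F i)"
  shows "t i x \<in> PIdl\<^bsub>R (Suc i)\<^esub> (F (Suc i))"
proof -
  interpret h: ring_hom_cring "R i" "R (Suc i)" "t i" by (rule t_ring_hom_cring)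
  obtain c where "c \<in> carrier (R i)" "x = c \<otimes>\<^bsub>R i\<^esub> F i"
    using assms by (auto simp: mem_cgenideal_iff)
  then show ?thesis
    using F_carrier[of i] by (auto simp: mem_cgenideal_iff t_F)
qed

lemma torsion_diff: "\<lbrakk>a \<in> torsion i; b \<in> torsion i\<rbrakk> \<Longrightarrow> a \<ominus>\<^bsub>R i\<^esub> b \<in> torsion i"
proof -
  interpret cring "R i" by (rule R_cring)
  assume "a \<in> torsion i" "b \<in> torsion i"
  moreover have "F i \<otimes>\<^bsub>R i\<^esub> (a \<ominus>\<^bsub>R i\<^esub> b) = F i \<otimes>\<^bsub>R i\<^esub> a \<ominus>\<^bsub>R i\<^esub> F i \<otimes>\<^bsub>R i\<^esub> b"
    if "a \<in> carrier (R i)" "b \<in> carrier (R i)"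
    using that F_carrier[of i] by algebra
  ultimately show ?thesis by simp
qed

lemma torsion_mult: "\<lbrakk>a \<in> torsion i; c \<in> carrier (R i)\<rbrakk> \<Longrightarrow> c \<otimes>\<^bsub>R i\<^esub> a \<in> torsion i"
proof -
  interpret cring "R i" by (rule R_cring)
  assume "a \<in> torsion i" "c \<in> carrier (R i)"
  then show ?thesis using F_carrier[of i] by (simp add: m_lcomm)
qed

lemma torsion_pow: "a \<in> torsion i \<Longrightarrow> a [^]\<^bsub>R i\<^esub> Suc n \<in> torsion i"
proof -
  interpret cring "R i" by (rule R_cring)
  assume "a \<in> torsion i"
  then show ?thesis using torsion_mult[of a i "a [^]\<^bsub>R i\<^esub> n"] by simp
qed

lemma t_torsion: "x \<in> torsion i \<Longrightarrow> t i x \<in> torsion (Suc i)"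
proof -
  interpret h: ring_hom_cring "R i" "R (Suc i)" "t i" by (rule t_ring_hom_cring)
  assume "x \<in> torsion i"
  then show ?thesis
    using F_carrier[of i] h.hom_mult[of "F i" x] by (simp add: t_F)
qed

lemma torsion_mem_F_eq_zero:
  assumes x: "x \<in> torsion i" and "x \<in> PIdl\<^bsub>R i\<^esub> (F i)"
  shows "x = \<zero>\<^bsub>R i\<^esub>"
proof -
  interpret cring "R i" by (rule R_cring)
  obtain c where c: "c \<in> carrier (R i)" "x = c \<otimes>\<^bsub>R i\<^esub> F i"
    using assms(2) by (auto simp: mem_cgenideal_iff)
  have "F i [^]\<^bsub>R i\<^esub> (2::nat) \<otimes>\<^bsub>R i\<^esub> c = F i \<otimes>\<^bsub>R i\<^esub> x"
    using c F_carrier[of i] by (simp add: numeral_2_eq_2 m_ac)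
  then have "F i \<otimes>\<^bsub>R i\<^esub> c = \<zero>\<^bsub>R i\<^esub>"
    using torsion_killed_by_F[OF c(1)] x by simp
  then show ?thesis using c F_carrier[of i] by (simp add: m_comm)
qed

lemma torsion_add_pow_p: "v \<in> torsion i \<Longrightarrow> add_pow (R i) p v = \<zero>\<^bsub>R i\<^esub>"
  using cring.add_pow_eq_zero_if_annihilated[OF R_cring char_in_F F_carrier] by simp

lemma G_pow_dvd_F: "\<exists>u\<in>carrier (R (Suc i)). G i [^]\<^bsub>R (Suc i)\<^esub> p = u \<otimes>\<^bsub>R (Suc i)\<^esub> F (Suc i)"
proof -
  interpret cring "R (Suc i)" by (rule R_cring)
  show ?thesis
    using cgenideal_eq_imp_dvd[OF _ F_carrier G_pow] G_carrier by simp
qed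

lemma F_dvd_G_pow: "\<exists>v\<in>carrier (R (Suc i)). F (Suc i) = v \<otimes>\<^bsub>R (Suc i)\<^esub> G i [^]\<^bsub>R (Suc i)\<^esub> p"
proof -
  interpret cring "R (Suc i)" by (rule R_cring)
  show ?thesis
    using cgenideal_eq_imp_dvd[OF F_carrier _ G_pow[symmetric]] G_carrier by simp
qed

lemma pow_mem_F_iff_mem_G:
  assumes y: "y \<in> carrier (R (Suc i))"
  shows "y [^]\<^bsub>R (Suc i)\<^esub> p \<in> PIdl\<^bsub>R (Suc i)\<^esub> (F (Suc i)) \<longleftrightarrow> y \<in> PIdl\<^bsub>R (Suc i)\<^esub> (G i)"
proof
  interpret cring "R (Suc i)" by (rule R_cring)
  obtain q where q: "p = Suc q" using p_ge_2 by (cases p) auto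
  have "PIdl\<^bsub>R (Suc i)\<^esub> (F (Suc i)) \<subseteq> PIdl\<^bsub>R (Suc i)\<^esub> (G i)"
    using G_pow cgenideal_pow_subset[OF G_carrier, of q] by (simp add: q)
  then show "y [^]\<^bsub>R (Suc i)\<^esub> p \<in> PIdl\<^bsub>R (Suc i)\<^esub> (F (Suc i)) \<Longrightarrow> y \<in> PIdl\<^bsub>R (Suc i)\<^esub> (G i)"
    using frobenius_kernel y set_add_cgenideal_subset[OF G_carrier] by blast
next
  interpret cring "R (Suc i)" by (rule R_cring)
  assume "y \<in> PIdl\<^bsub>R (Suc i)\<^esub> (G i)"
  then obtain c where c: "c \<in> carrier (R (Suc i))" "y = c \<otimes>\<^bsub>R (Suc i)\<^esub> G i"
    by (auto simp: mem_cgenideal_iff)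
  obtain u where u: "u \<in> carrier (R (Suc i))" "G i [^]\<^bsub>R (Suc i)\<^esub> p = u \<otimes>\<^bsub>R (Suc i)\<^esub> F (Suc i)"
    using G_pow_dvd_F by blast
  have "y [^]\<^bsub>R (Suc i)\<^esub> p = (c [^]\<^bsub>R (Suc i)\<^esub> p \<otimes>\<^bsub>R (Suc i)\<^esub> u) \<otimes>\<^bsub>R (Suc i)\<^esub> F (Suc i)"
    using c u G_carrier F_carrier by (simp add: nat_pow_distrib m_assoc)
  then show "y [^]\<^bsub>R (Suc i)\<^esub> p \<in> PIdl\<^bsub>R (Suc i)\<^esub> (F (Suc i))"
    using c u by (auto simp: mem_cgenideal_iff)
qed

lemma Ftor_torsion: "y \<in> torsion (Suc i) \<Longrightarrow> Ftor i y \<in> torsion i"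
  using bij_betwE[OF Ftor_bij_torsion] by blast

lemma t_Ftor:
  assumes y: "y \<in> torsion (Suc i)"
  shows "t i (Ftor i y) = y [^]\<^bsub>R (Suc i)\<^esub> p"
proof -
  \<comment> \<open>Both sides are torsion and torsion meets (F) trivially, so the congruence is an equality.\<close>
  interpret cring "R (Suc i)" by (rule R_cring)
  obtain q where q: "p = Suc q" using p_ge_2 by (cases p) auto
  have "y [^]\<^bsub>R (Suc i)\<^esub> p \<in> torsion (Suc i)"
    unfolding q by (rule torsion_pow[OF y])
  then have "t i (Ftor i y) \<ominus>\<^bsub>R (Suc i)\<^esub> y [^]\<^bsub>R (Suc i)\<^esub> p \<in> torsion (Suc i)"
    by (rule torsion_diff[OF t_torsion[OF Ftor_torsion[OF y]]])
  then have "t i (Ftor i y) \<ominus>\<^bsub>R (Suc i)\<^esub> y [^]\<^bsub>R (Suc i)\<^esub> p = \<zero>\<^bsub>R (Suc i)\<^esub>"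
    using Ftor_frobenius y by (intro torsion_mem_F_eq_zero) auto
  then show ?thesis
    using t_torsion[OF Ftor_torsion[OF y]] y by simp
qed

lemma Ftor_eq_zero:
  assumes y: "y \<in> torsion (Suc i)" and "y [^]\<^bsub>R (Suc i)\<^esub> p \<in> PIdl\<^bsub>R (Suc i)\<^esub> (F (Suc i))"
  shows "Ftor i y = \<zero>\<^bsub>R i\<^esub>"
proof (rule torsion_mem_F_eq_zero)
  show "Ftor i y \<in> torsion i"
    using Ftor_torsion[OF y] .
  then show "Ftor i y \<in> PIdl\<^bsub>R i\<^esub> (F i)"
    using quotient_inj[of "Ftor i y" i] assms(2) t_Ftor[OF y] by simp
qed

lemma G_mult_torsion:
  assumes s: "s \<in> torsion (Suc i)"
  shows "G i \<otimes>\<^bsub>R (Suc i)\<^esub> s = \<zero>\<^bsub>R (Suc i)\<^esub>"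
proof -
  \<comment> \<open>y = G s is torsion with y^p in (F), so Ftor sends it to 0 = Ftor 0; Ftor is injective.\<close>
  interpret cring "R (Suc i)" by (rule R_cring)
  define y where "y = G i \<otimes>\<^bsub>R (Suc i)\<^esub> s"
  have y: "y \<in> torsion (Suc i)"
    unfolding y_def using torsion_mult[OF s G_carrier] .
  have "y \<in> PIdl\<^bsub>R (Suc i)\<^esub> (G i)"
    unfolding y_def using s G_carrier by (auto simp: mem_cgenideal_iff m_comm)
  then have "Ftor i y = \<zero>\<^bsub>R i\<^esub>"
    using Ftor_eq_zero[OF y] pow_mem_F_iff_mem_G y by simp
  moreover have "Ftor i \<zero>\<^bsub>R (Suc i)\<^esub> = \<zero>\<^bsub>R i\<^esub>"
  proof (rule Ftor_eq_zero)
    show "\<zero>\<^bsub>R (Suc i)\<^esub> \<in> torsion (Suc i)"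
      using F_carrier by simp
    have "\<zero>\<^bsub>R (Suc i)\<^esub> [^]\<^bsub>R (Suc i)\<^esub> p = \<zero>\<^bsub>R (Suc i)\<^esub>"
      using p_ge_2 by (simp add: nat_pow_zero)
    then show "\<zero>\<^bsub>R (Suc i)\<^esub> [^]\<^bsub>R (Suc i)\<^esub> p \<in> PIdl\<^bsub>R (Suc i)\<^esub> (F (Suc i))"
      using additive_subgroup.zero_closed[OF ideal.axioms(1)[OF F_ideal]] by simp
  qed
  ultimately have "y = \<zero>\<^bsub>R (Suc i)\<^esub>"
    using inj_onD[OF bij_betw_imp_inj_on[OF Ftor_bij_torsion] _ y, of "\<zero>\<^bsub>R (Suc i)\<^esub>"] F_carrier
    by simp
  then show ?thesis unfolding y_def .
qed

lemma torsion_if_G_pow_annihilates: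
  assumes s: "s \<in> carrier (R (Suc i))" and Gs: "G i [^]\<^bsub>R (Suc i)\<^esub> (n::nat) \<otimes>\<^bsub>R (Suc i)\<^esub> s = \<zero>\<^bsub>R (Suc i)\<^esub>"
  shows "s \<in> torsion (Suc i)"
proof -
  interpret cring "R (Suc i)" by (rule R_cring)
  obtain u where u: "u \<in> carrier (R (Suc i))" "F (Suc i) = u \<otimes>\<^bsub>R (Suc i)\<^esub> G i [^]\<^bsub>R (Suc i)\<^esub> p"
    using F_dvd_G_pow by blast
  have "n \<le> p * n" using p_ge_2 by simp
  then have "F (Suc i) [^]\<^bsub>R (Suc i)\<^esub> n
      = (u [^]\<^bsub>R (Suc i)\<^esub> n \<otimes>\<^bsub>R (Suc i)\<^esub> G i [^]\<^bsub>R (Suc i)\<^esub> (p * n - n)) \<otimes>\<^bsub>R (Suc i)\<^esub> G i [^]\<^bsub>R (Suc i)\<^esub> n"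
    using u G_carrier by (simp add: nat_pow_distrib nat_pow_pow nat_pow_mult m_assoc)
  then have "F (Suc i) [^]\<^bsub>R (Suc i)\<^esub> n \<otimes>\<^bsub>R (Suc i)\<^esub> s = \<zero>\<^bsub>R (Suc i)\<^esub>"
    using u s G_carrier Gs by (simp add: m_assoc)
  then show ?thesis
    using torsion_killed_by_F s by simp
qed

lemma lift_torsion_congruence:
  assumes w: "w \<in> carrier (R (Suc i))" and s: "s \<in> torsion (Suc i)"
    and ws: "w [^]\<^bsub>R (Suc i)\<^esub> p \<ominus>\<^bsub>R (Suc i)\<^esub> s \<in> PIdl\<^bsub>R (Suc i)\<^esub> (F (Suc i))"
  shows "\<exists>v\<in>torsion (Suc (Suc i)). t (Suc i) w \<ominus>\<^bsub>R (Suc (Suc i))\<^esub> v \<in> PIdl\<^bsub>R (Suc (Suc i))\<^esub> (G (Suc i))"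
proof -
  interpret C: cring "R (Suc (Suc i))" by (rule R_cring)
  interpret h: ring_hom_cring "R (Suc i)" "R (Suc (Suc i))" "t (Suc i)" by (rule t_ring_hom_cring)
  obtain v where v: "v \<in> torsion (Suc (Suc i))" and Ftor_v: "Ftor (Suc i) v = s"
    using bij_betw_imp_surj_on[OF Ftor_bij_torsion] s by (metis imageE)
  have v_carrier: "v \<in> carrier (R (Suc (Suc i)))" using v by simp
  define a where "a = t (Suc i) w"
  have a_carrier: "a \<in> carrier (R (Suc (Suc i)))" using w by (simp add: a_def)
  have "t (Suc i) (w [^]\<^bsub>R (Suc i)\<^esub> p \<ominus>\<^bsub>R (Suc i)\<^esub> s)
      = a [^]\<^bsub>R (Suc (Suc i))\<^esub> p \<ominus>\<^bsub>R (Suc (Suc i))\<^esub> v [^]\<^bsub>R (Suc (Suc i))\<^esub> p"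
    using w s t_Ftor[OF v] Ftor_v by (simp add: a_def)
  then have a_v: "a [^]\<^bsub>R (Suc (Suc i))\<^esub> p \<ominus>\<^bsub>R (Suc (Suc i))\<^esub> v [^]\<^bsub>R (Suc (Suc i))\<^esub> p
      \<in> PIdl\<^bsub>R (Suc (Suc i))\<^esub> (F (Suc (Suc i)))"
    using t_mem_F[OF ws] by simp
  define b where "b = a \<ominus>\<^bsub>R (Suc (Suc i))\<^esub> v"
  have b_carrier: "b \<in> carrier (R (Suc (Suc i)))" using a_carrier v_carrier by (simp add: b_def)
  have "a = b \<oplus>\<^bsub>R (Suc (Suc i))\<^esub> v"
    unfolding b_def using a_carrier v_carrier by algebra
  then have "a [^]\<^bsub>R (Suc (Suc i))\<^esub> p = b [^]\<^bsub>R (Suc (Suc i))\<^esub> p \<oplus>\<^bsub>R (Suc (Suc i))\<^esub> v [^]\<^bsub>R (Suc (Suc i))\<^esub> p"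
    using C.nat_pow_add_prime[OF prime b_carrier v_carrier torsion_add_pow_p[OF v]] by simp
  then have "b [^]\<^bsub>R (Suc (Suc i))\<^esub> p
      = a [^]\<^bsub>R (Suc (Suc i))\<^esub> p \<ominus>\<^bsub>R (Suc (Suc i))\<^esub> v [^]\<^bsub>R (Suc (Suc i))\<^esub> p"
    using b_carrier v_carrier C.nat_pow_closed by algebra
  then have "b \<in> PIdl\<^bsub>R (Suc (Suc i))\<^esub> (G (Suc i))"
    using pow_mem_F_iff_mem_G[OF b_carrier] a_v by simp
  then show ?thesis using v by (auto simp: a_def b_def)
qed
lemma descend_torsion_congruence_G:
  assumes w: "w \<in> carrier (R (Suc i))" and v: "v \<in> torsion (Suc (Suc i))"
    and wv: "t (Suc i) w \<ominus>\<^bsub>R (Suc (Suc i))\<^esub> v \<in> PIdl\<^bsub>R (Suc (Suc i))\<^esub> (G (Suc i))"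
  shows "\<exists>s\<in>torsion (Suc i). w \<ominus>\<^bsub>R (Suc i)\<^esub> s \<in> PIdl\<^bsub>R (Suc i)\<^esub> (G i)"
proof -
  interpret B: cring "R (Suc i)" by (rule R_cring)
  interpret C: cring "R (Suc (Suc i))" by (rule R_cring)
  interpret h: ring_hom_cring "R (Suc i)" "R (Suc (Suc i))" "t (Suc i)" by (rule t_ring_hom_cring)
  note G_carrier' = G_carrier[of i] G_carrier[of "Suc i"]
  have v_carrier: "v \<in> carrier (R (Suc (Suc i)))" using v by simp
  obtain q where q: "p = Suc (Suc q)" using p_ge_2 by (metis add_2_eq_Suc le_Suc_ex)
  have G_pow_carrier: "G i [^]\<^bsub>R (Suc i)\<^esub> q \<in> carrier (R (Suc i))"
    "G (Suc i) [^]\<^bsub>R (Suc (Suc i))\<^esub> q \<in> carrier (R (Suc (Suc i)))"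
    using G_carrier' by simp_all
  obtain c where c: "c \<in> carrier (R (Suc (Suc i)))"
    and tw: "t (Suc i) w = v \<oplus>\<^bsub>R (Suc (Suc i))\<^esub> c \<otimes>\<^bsub>R (Suc (Suc i))\<^esub> G (Suc i)"
    using wv w v G_carrier' by (auto simp: C.diff_mem_cgenideal_iff)
  \<comment> \<open>Multiplying by G^(p-1) kills the torsion part v and turns c G into a multiple of
    G^p, which generates (F); so G^(p-1) w descends to (F) = (G^p) one level down.\<close>
  define r where "r = G i [^]\<^bsub>R (Suc i)\<^esub> Suc q \<otimes>\<^bsub>R (Suc i)\<^esub> w"
  have r_carrier: "r \<in> carrier (R (Suc i))" using w G_carrier' by (simp add: r_def)
  have "t (Suc i) r = G (Suc i) [^]\<^bsub>R (Suc (Suc i))\<^esub> Suc q \<otimes>\<^bsub>R (Suc (Suc i))\<^esub> t (Suc i) w"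
    using w G_carrier' by (simp add: r_def t_G del: C.nat_pow_Suc)
  also have "\<dots> = G (Suc i) [^]\<^bsub>R (Suc (Suc i))\<^esub> q \<otimes>\<^bsub>R (Suc (Suc i))\<^esub> (G (Suc i) \<otimes>\<^bsub>R (Suc (Suc i))\<^esub> v)
      \<oplus>\<^bsub>R (Suc (Suc i))\<^esub> c \<otimes>\<^bsub>R (Suc (Suc i))\<^esub> G (Suc i) [^]\<^bsub>R (Suc (Suc i))\<^esub> p"
    unfolding tw q C.nat_pow_Suc using G_carrier' G_pow_carrier v_carrier c by algebra
  also have "\<dots> = c \<otimes>\<^bsub>R (Suc (Suc i))\<^esub> G (Suc i) [^]\<^bsub>R (Suc (Suc i))\<^esub> p"
    using G_mult_torsion[OF v] G_carrier' G_pow_carrier c by simp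
  finally have "t (Suc i) r \<in> PIdl\<^bsub>R (Suc (Suc i))\<^esub> (G (Suc i) [^]\<^bsub>R (Suc (Suc i))\<^esub> p)"
    using c by (auto simp: mem_cgenideal_iff)
  then have "r \<in> PIdl\<^bsub>R (Suc i)\<^esub> (G i [^]\<^bsub>R (Suc i)\<^esub> p)"
    using quotient_inj[OF r_carrier] G_pow by simp
  then obtain e where e: "e \<in> carrier (R (Suc i))" "r = e \<otimes>\<^bsub>R (Suc i)\<^esub> G i [^]\<^bsub>R (Suc i)\<^esub> p"
    by (auto simp: mem_cgenideal_iff)
  define s where "s = w \<ominus>\<^bsub>R (Suc i)\<^esub> e \<otimes>\<^bsub>R (Suc i)\<^esub> G i"
  have s_carrier: "s \<in> carrier (R (Suc i))" using w e G_carrier' by (simp add: s_def)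
  have "G i [^]\<^bsub>R (Suc i)\<^esub> Suc q \<otimes>\<^bsub>R (Suc i)\<^esub> s = r \<ominus>\<^bsub>R (Suc i)\<^esub> e \<otimes>\<^bsub>R (Suc i)\<^esub> G i [^]\<^bsub>R (Suc i)\<^esub> p"
    unfolding s_def r_def q B.nat_pow_Suc using w e G_carrier' G_pow_carrier by algebra
  then have "s \<in> torsion (Suc i)"
    using torsion_if_G_pow_annihilates[OF s_carrier, of "Suc q"] e G_carrier' by simp
  moreover have "w \<ominus>\<^bsub>R (Suc i)\<^esub> s = e \<otimes>\<^bsub>R (Suc i)\<^esub> G i"
    unfolding s_def using w e G_carrier' by algebra
  ultimately show ?thesis
    using e by (auto simp: mem_cgenideal_iff)
qed

lemma root_torsion_congruence:
  assumes "w \<in> carrier (R (Suc i))" "s \<in> torsion (Suc i)"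
    and "w [^]\<^bsub>R (Suc i)\<^esub> p \<ominus>\<^bsub>R (Suc i)\<^esub> s \<in> PIdl\<^bsub>R (Suc i)\<^esub> (F (Suc i))"
  shows "\<exists>s'\<in>torsion (Suc i). w \<ominus>\<^bsub>R (Suc i)\<^esub> s' \<in> PIdl\<^bsub>R (Suc i)\<^esub> (G i)"
  using lift_torsion_congruence[OF assms] descend_torsion_congruence_G[OF assms(1)] by blast

lemma pow_torsion_congruence:
  assumes w: "w \<in> carrier (R (Suc i))" and s: "s \<in> torsion (Suc i)"
    and ws: "w \<ominus>\<^bsub>R (Suc i)\<^esub> s \<in> PIdl\<^bsub>R (Suc i)\<^esub> (G i)"
  shows "w [^]\<^bsub>R (Suc i)\<^esub> p \<ominus>\<^bsub>R (Suc i)\<^esub> t i (Ftor i s) \<in> PIdl\<^bsub>R (Suc i)\<^esub> (F (Suc i))"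
proof -
  interpret cring "R (Suc i)" by (rule R_cring)
  have s_carrier: "s \<in> carrier (R (Suc i))" using s by simp
  obtain c where c: "c \<in> carrier (R (Suc i))" and w_eq: "w = s \<oplus>\<^bsub>R (Suc i)\<^esub> c \<otimes>\<^bsub>R (Suc i)\<^esub> G i"
    using ws w s_carrier G_carrier by (auto simp: diff_mem_cgenideal_iff)
  obtain u where u: "u \<in> carrier (R (Suc i))" "G i [^]\<^bsub>R (Suc i)\<^esub> p = u \<otimes>\<^bsub>R (Suc i)\<^esub> F (Suc i)"
    using G_pow_dvd_F by blast
  obtain q where q: "p = Suc q" using p_ge_2 by (cases p) auto
  have "s \<otimes>\<^bsub>R (Suc i)\<^esub> (c \<otimes>\<^bsub>R (Suc i)\<^esub> G i) = c \<otimes>\<^bsub>R (Suc i)\<^esub> (G i \<otimes>\<^bsub>R (Suc i)\<^esub> s)"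
    using s_carrier c G_carrier by (simp add: m_ac)
  then have "w [^]\<^bsub>R (Suc i)\<^esub> p = s [^]\<^bsub>R (Suc i)\<^esub> p \<oplus>\<^bsub>R (Suc i)\<^esub> (c \<otimes>\<^bsub>R (Suc i)\<^esub> G i) [^]\<^bsub>R (Suc i)\<^esub> p"
    unfolding w_eq q using nat_pow_add_orthogonal s_carrier c G_carrier G_mult_torsion[OF s] by simp
  also have "(c \<otimes>\<^bsub>R (Suc i)\<^esub> G i) [^]\<^bsub>R (Suc i)\<^esub> p
      = (c [^]\<^bsub>R (Suc i)\<^esub> p \<otimes>\<^bsub>R (Suc i)\<^esub> u) \<otimes>\<^bsub>R (Suc i)\<^esub> F (Suc i)"
    using c u G_carrier F_carrier by (simp add: nat_pow_distrib m_assoc)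
  finally show ?thesis
    using c u s_carrier F_carrier t_Ftor[OF s]
    by (auto simp: diff_mem_cgenideal_iff intro!: bexI[of _ "c [^]\<^bsub>R (Suc i)\<^esub> p \<otimes>\<^bsub>R (Suc i)\<^esub> u"])
qed

lemma descend_torsion_congruence_F:
  assumes z: "z \<in> carrier (R i)" and s0: "s0 \<in> torsion (Suc i)"
    and zs0: "t i z \<ominus>\<^bsub>R (Suc i)\<^esub> s0 \<in> PIdl\<^bsub>R (Suc i)\<^esub> (F (Suc i))"
  shows "\<exists>\<sigma>\<in>torsion i. z \<ominus>\<^bsub>R i\<^esub> \<sigma> \<in> PIdl\<^bsub>R i\<^esub> (F i)"
proof -
  interpret B: cring "R (Suc i)" by (rule R_cring)
  interpret h: ring_hom_cring "R i" "R (Suc i)" "t i" by (rule t_ring_hom_cring)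
  note ideal_F = F_ideal[of "Suc i"]
  have tz: "t i z \<in> carrier (R (Suc i))" and s0_carrier: "s0 \<in> carrier (R (Suc i))"
    using z s0 by simp_all
  obtain w where w: "w \<in> carrier (R (Suc i))"
    and zw: "t i z \<ominus>\<^bsub>R (Suc i)\<^esub> w [^]\<^bsub>R (Suc i)\<^esub> p \<in> PIdl\<^bsub>R (Suc i)\<^esub> (F (Suc i))"
    using frobenius_surj[OF z] by blast
  have "w [^]\<^bsub>R (Suc i)\<^esub> p \<ominus>\<^bsub>R (Suc i)\<^esub> s0 \<in> PIdl\<^bsub>R (Suc i)\<^esub> (F (Suc i))"
    using B.ideal_diff_trans[OF ideal_F _ tz s0_carrier B.ideal_diff_sym[OF ideal_F tz _ zw] zs0] w
    by simp
  then obtain s where s: "s \<in> torsion (Suc i)" and ws: "w \<ominus>\<^bsub>R (Suc i)\<^esub> s \<in> PIdl\<^bsub>R (Suc i)\<^esub> (G i)"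
    using root_torsion_congruence[OF w s0] by blast
  define \<sigma> where "\<sigma> = Ftor i s"
  have \<sigma>: "\<sigma> \<in> torsion i" using Ftor_torsion[OF s] by (simp add: \<sigma>_def)
  have "t i z \<ominus>\<^bsub>R (Suc i)\<^esub> t i \<sigma> \<in> PIdl\<^bsub>R (Suc i)\<^esub> (F (Suc i))"
    using B.ideal_diff_trans[OF ideal_F tz _ _ zw pow_torsion_congruence[OF w s ws]] w \<sigma>
    by (simp add: \<sigma>_def)
  then have "z \<ominus>\<^bsub>R i\<^esub> \<sigma> \<in> PIdl\<^bsub>R i\<^esub> (F i)"
    using quotient_inj[of "z \<ominus>\<^bsub>R i\<^esub> \<sigma>" i] z \<sigma> by simp
  then show ?thesis using \<sigma> by blast
qed

lemma kernel_t_divisible_by_F: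
  assumes x: "x \<in> carrier (R i)" and tx: "t i x = \<zero>\<^bsub>R (Suc i)\<^esub>"
  shows "\<exists>x'\<in>carrier (R i). t i x' = \<zero>\<^bsub>R (Suc i)\<^esub> \<and> x = x' \<otimes>\<^bsub>R i\<^esub> F i"
proof -
  interpret A: cring "R i" by (rule R_cring)
  interpret B: cring "R (Suc i)" by (rule R_cring)
  interpret h: ring_hom_cring "R i" "R (Suc i)" "t i" by (rule t_ring_hom_cring)
  have "x \<in> PIdl\<^bsub>R i\<^esub> (F i)"
    using quotient_inj[OF x] tx additive_subgroup.zero_closed[OF ideal.axioms(1)[OF F_ideal]] by simp
  then obtain z where z: "z \<in> carrier (R i)" and x_eq: "x = z \<otimes>\<^bsub>R i\<^esub> F i"
    by (auto simp: mem_cgenideal_iff)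
  have "F (Suc i) \<otimes>\<^bsub>R (Suc i)\<^esub> t i z = t i x"
    using z F_carrier by (simp add: x_eq t_F B.m_comm)
  then have tz: "t i z \<in> torsion (Suc i)" using z tx by simp
  have "t i z \<ominus>\<^bsub>R (Suc i)\<^esub> t i z = \<zero>\<^bsub>R (Suc i)\<^esub>"
    using z by (simp add: B.minus_eq B.r_neg)
  then obtain \<sigma> where \<sigma>: "\<sigma> \<in> torsion i" and "z \<ominus>\<^bsub>R i\<^esub> \<sigma> \<in> PIdl\<^bsub>R i\<^esub> (F i)"
    using descend_torsion_congruence_F[OF z tz]
      additive_subgroup.zero_closed[OF ideal.axioms(1)[OF F_ideal]] by auto
  then obtain c where c: "c \<in> carrier (R i)" and z_eq: "z = \<sigma> \<oplus>\<^bsub>R i\<^esub> c \<otimes>\<^bsub>R i\<^esub> F i"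
    using z F_carrier by (auto simp: A.diff_mem_cgenideal_iff)
  have \<sigma>_carrier: "\<sigma> \<in> carrier (R i)" using \<sigma> by simp
  have "x = F i \<otimes>\<^bsub>R i\<^esub> \<sigma> \<oplus>\<^bsub>R i\<^esub> (c \<otimes>\<^bsub>R i\<^esub> F i) \<otimes>\<^bsub>R i\<^esub> F i"
    unfolding x_eq z_eq using \<sigma>_carrier c F_carrier by algebra
  then have x_eq': "x = (c \<otimes>\<^bsub>R i\<^esub> F i) \<otimes>\<^bsub>R i\<^esub> F i"
    using \<sigma> c F_carrier by simp
  have "c \<otimes>\<^bsub>R i\<^esub> F i = z \<ominus>\<^bsub>R i\<^esub> \<sigma>"
    unfolding z_eq using \<sigma>_carrier c F_carrier[of i] by algebra
  then have "t i (c \<otimes>\<^bsub>R i\<^esub> F i) = t i z \<ominus>\<^bsub>R (Suc i)\<^esub> t i \<sigma>"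
    using z \<sigma>_carrier by simp
  then have "t i (c \<otimes>\<^bsub>R i\<^esub> F i) \<in> torsion (Suc i)"
    using torsion_diff[OF tz t_torsion[OF \<sigma>]] by simp
  moreover have "t i (c \<otimes>\<^bsub>R i\<^esub> F i) \<in> PIdl\<^bsub>R (Suc i)\<^esub> (F (Suc i))"
    using c F_carrier by (intro t_mem_F) (auto simp: mem_cgenideal_iff)
  ultimately have "t i (c \<otimes>\<^bsub>R i\<^esub> F i) = \<zero>\<^bsub>R (Suc i)\<^esub>"
    by (rule torsion_mem_F_eq_zero)
  then show ?thesis using x_eq' c F_carrier by blast
qed

lemma kernel_t_subset_F_pow:
  "\<lbrakk>x \<in> carrier (R i); t i x = \<zero>\<^bsub>R (Suc i)\<^esub>\<rbrakk> \<Longrightarrow> x \<in> PIdl\<^bsub>R i\<^esub> (F i [^]\<^bsub>R i\<^esub> (n::nat))"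
proof (induction n arbitrary: x)
  case 0
  interpret cring "R i" by (rule R_cring)
  show ?case using 0 by (auto simp: mem_cgenideal_iff intro!: bexI[of _ x])
next
  case (Suc n)
  interpret cring "R i" by (rule R_cring)
  obtain x' where x': "x' \<in> carrier (R i)" "t i x' = \<zero>\<^bsub>R (Suc i)\<^esub>" "x = x' \<otimes>\<^bsub>R i\<^esub> F i"
    using kernel_t_divisible_by_F[OF Suc.prems] by blast
  obtain c where c: "c \<in> carrier (R i)" "x' = c \<otimes>\<^bsub>R i\<^esub> F i [^]\<^bsub>R i\<^esub> n"
    using Suc.IH[OF x'(1,2)] by (auto simp: mem_cgenideal_iff)
  have "x = c \<otimes>\<^bsub>R i\<^esub> F i [^]\<^bsub>R i\<^esub> Suc n"
    using x'(3) c F_carrier by (simp add: m_assoc)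
  then show ?case using c(1) by (auto simp: mem_cgenideal_iff)
qed

lemma t_inj_on:
  assumes "separated i"
  shows "inj_on (t i) (carrier (R i))"
proof -
  interpret h: ring_hom_cring "R i" "R (Suc i)" "t i" by (rule t_ring_hom_cring)
  have "a_kernel (R i) (R (Suc i)) (t i) \<subseteq> (\<Inter>n. PIdl\<^bsub>R i\<^esub> (F i [^]\<^bsub>R i\<^esub> (n::nat)))"
    using kernel_t_subset_F_pow unfolding a_kernel_def' by blast
  also have "\<dots> = {\<zero>\<^bsub>R i\<^esub>}"
    using assms unfolding separated_def .
  finally have "a_kernel (R i) (R (Suc i)) (t i) = {\<zero>\<^bsub>R i\<^esub>}"
    unfolding a_kernel_def' by auto
  then show ?thesis by (rule h.ring.trivial_ker_imp_inj)
qed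

lemma pow_p_eq_zero_imp_mem_G_pow:
  assumes x: "x \<in> carrier (R (Suc i))" and xp: "x [^]\<^bsub>R (Suc i)\<^esub> p = \<zero>\<^bsub>R (Suc i)\<^esub>"
  shows "x \<in> PIdl\<^bsub>R (Suc i)\<^esub> (G i [^]\<^bsub>R (Suc i)\<^esub> Suc n)"
proof (induction n)
  interpret cring "R (Suc i)" by (rule R_cring)
  case 0
  have "x \<in> PIdl\<^bsub>R (Suc i)\<^esub> (G i)"
    using pow_mem_F_iff_mem_G[OF x] xp additive_subgroup.zero_closed[OF ideal.axioms(1)[OF F_ideal]]
    by simp
  then show ?case using G_carrier by simp
next
  interpret cring "R (Suc i)" by (rule R_cring)
  case (Suc n)
  obtain c where c: "c \<in> carrier (R (Suc i))" and x_eq: "x = c \<otimes>\<^bsub>R (Suc i)\<^esub> G i [^]\<^bsub>R (Suc i)\<^esub> Suc n"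
    using Suc.IH by (auto simp: mem_cgenideal_iff)
  have "G i [^]\<^bsub>R (Suc i)\<^esub> (Suc n * p) \<otimes>\<^bsub>R (Suc i)\<^esub> c [^]\<^bsub>R (Suc i)\<^esub> p = x [^]\<^bsub>R (Suc i)\<^esub> p"
    unfolding x_eq using c G_carrier by (simp add: nat_pow_distrib nat_pow_pow nat_pow_mult m_comm)
  then have "c [^]\<^bsub>R (Suc i)\<^esub> p \<in> torsion (Suc i)"
    using torsion_if_G_pow_annihilates[of "c [^]\<^bsub>R (Suc i)\<^esub> p"] c xp by simp
  moreover have "c [^]\<^bsub>R (Suc i)\<^esub> p \<ominus>\<^bsub>R (Suc i)\<^esub> c [^]\<^bsub>R (Suc i)\<^esub> p \<in> PIdl\<^bsub>R (Suc i)\<^esub> (F (Suc i))"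
    using c additive_subgroup.zero_closed[OF ideal.axioms(1)[OF F_ideal]] by (simp add: minus_eq r_neg)
  ultimately obtain s where s: "s \<in> torsion (Suc i)" and "c \<ominus>\<^bsub>R (Suc i)\<^esub> s \<in> PIdl\<^bsub>R (Suc i)\<^esub> (G i)"
    using root_torsion_congruence[OF c] by blast
  then obtain e where e: "e \<in> carrier (R (Suc i))" and c_eq: "c = s \<oplus>\<^bsub>R (Suc i)\<^esub> e \<otimes>\<^bsub>R (Suc i)\<^esub> G i"
    using c G_carrier by (auto simp: diff_mem_cgenideal_iff)
  have s_carrier: "s \<in> carrier (R (Suc i))" using s by simp
  have G_pow_carrier: "G i [^]\<^bsub>R (Suc i)\<^esub> n \<in> carrier (R (Suc i))" using G_carrier by simp
  have "x = G i [^]\<^bsub>R (Suc i)\<^esub> n \<otimes>\<^bsub>R (Suc i)\<^esub> (G i \<otimes>\<^bsub>R (Suc i)\<^esub> s)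
      \<oplus>\<^bsub>R (Suc i)\<^esub> e \<otimes>\<^bsub>R (Suc i)\<^esub> G i [^]\<^bsub>R (Suc i)\<^esub> Suc (Suc n)"
    unfolding x_eq c_eq nat_pow_Suc using s_carrier e G_carrier[of i] G_pow_carrier by algebra
  then have "x = e \<otimes>\<^bsub>R (Suc i)\<^esub> G i [^]\<^bsub>R (Suc i)\<^esub> Suc (Suc n)"
    using G_mult_torsion[OF s] e G_carrier by simp
  then show ?case using e by (auto simp: mem_cgenideal_iff)
qed

lemma pow_p_eq_zero_imp_zero:
  assumes sep: "separated (Suc i)"
    and x: "x \<in> carrier (R (Suc i))" and xp: "x [^]\<^bsub>R (Suc i)\<^esub> p = \<zero>\<^bsub>R (Suc i)\<^esub>"
  shows "x = \<zero>\<^bsub>R (Suc i)\<^esub>"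
proof -
  interpret cring "R (Suc i)" by (rule R_cring)
  obtain u where u: "u \<in> carrier (R (Suc i))" "G i [^]\<^bsub>R (Suc i)\<^esub> p = u \<otimes>\<^bsub>R (Suc i)\<^esub> F (Suc i)"
    using G_pow_dvd_F by blast
  have "x \<in> PIdl\<^bsub>R (Suc i)\<^esub> (F (Suc i) [^]\<^bsub>R (Suc i)\<^esub> n)" for n :: nat
  proof -
    obtain c where c: "c \<in> carrier (R (Suc i))" "x = c \<otimes>\<^bsub>R (Suc i)\<^esub> G i [^]\<^bsub>R (Suc i)\<^esub> Suc (p * n)"
      using pow_p_eq_zero_imp_mem_G_pow[OF x xp, of "p * n"] by (auto simp: mem_cgenideal_iff)
    have "G i [^]\<^bsub>R (Suc i)\<^esub> Suc (p * n) = (G i [^]\<^bsub>R (Suc i)\<^esub> p) [^]\<^bsub>R (Suc i)\<^esub> n \<otimes>\<^bsub>R (Suc i)\<^esub> G i"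
      using G_carrier by (simp add: nat_pow_pow)
    then have "x = (c \<otimes>\<^bsub>R (Suc i)\<^esub> G i \<otimes>\<^bsub>R (Suc i)\<^esub> u [^]\<^bsub>R (Suc i)\<^esub> n) \<otimes>\<^bsub>R (Suc i)\<^esub> F (Suc i) [^]\<^bsub>R (Suc i)\<^esub> n"
      using c u G_carrier F_carrier by (simp add: nat_pow_distrib m_ac)
    then show ?thesis using c u G_carrier by (auto simp: mem_cgenideal_iff)
  qed
  then show ?thesis using sep x by (auto simp: separated_def)
qed

lemma pow_p_power_eq_zero_imp_zero:
  assumes "separated (Suc i)"
  shows "\<lbrakk>x \<in> carrier (R (Suc i)); x [^]\<^bsub>R (Suc i)\<^esub> (p ^ k) = \<zero>\<^bsub>R (Suc i)\<^esub>\<rbrakk> \<Longrightarrow> x = \<zero>\<^bsub>R (Suc i)\<^esub>"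
proof (induction k arbitrary: x)
  interpret cring "R (Suc i)" by (rule R_cring)
  case 0
  then show ?case by simp
next
  interpret cring "R (Suc i)" by (rule R_cring)
  case (Suc k)
  have "(x [^]\<^bsub>R (Suc i)\<^esub> (p ^ k)) [^]\<^bsub>R (Suc i)\<^esub> p = \<zero>\<^bsub>R (Suc i)\<^esub>"
    using Suc.prems by (simp add: nat_pow_pow mult.commute)
  then have "x [^]\<^bsub>R (Suc i)\<^esub> (p ^ k) = \<zero>\<^bsub>R (Suc i)\<^esub>"
    using pow_p_eq_zero_imp_zero[OF assms] Suc.prems(1) by simp
  then show ?case using Suc.IH Suc.prems(1) by blast
qed

lemma nilpotent_eq_zero:
  assumes "separated i" "separated (Suc i)"
    and x: "x \<in> carrier (R i)" and xm: "x [^]\<^bsub>R i\<^esub> (m::nat) = \<zero>\<^bsub>R i\<^esub>"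
  shows "x = \<zero>\<^bsub>R i\<^esub>"
proof -
  interpret B: cring "R (Suc i)" by (rule R_cring)
  interpret h: ring_hom_cring "R i" "R (Suc i)" "t i" by (rule t_ring_hom_cring)
  have "m \<le> p ^ m"
    using p_ge_2 less_exp[of m] power_mono[of 2 p m] by linarith
  then have "t i x [^]\<^bsub>R (Suc i)\<^esub> (p ^ m)
      = t i (x [^]\<^bsub>R i\<^esub> m) \<otimes>\<^bsub>R (Suc i)\<^esub> t i x [^]\<^bsub>R (Suc i)\<^esub> (p ^ m - m)"
    using x by (simp add: B.nat_pow_mult)
  then have "t i x = \<zero>\<^bsub>R (Suc i)\<^esub>"
    using pow_p_power_eq_zero_imp_zero[OF assms(2)] x xm by simp
  then show ?thesis
    using inj_onD[OF t_inj_on[OF assms(1)] _ x] by simp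
qed

end

section \<open>Reduction to principal generators\<close>

lemma tcomp_ring_hom:
  assumes "\<And>i. t i \<in> ring_hom (R i) (R (Suc i))"
  shows "tcomp t j n \<in> ring_hom (R j) (R (j + n))"
proof (induction n)
  case 0
  then show ?case using id_ring_hom[of "R j"] by (simp add: id_def)
next
  case (Suc n)
  then show ?case
    using ring_hom_trans[OF Suc assms[of "j + n"]] by (simp only: tcomp.simps add_Suc_right)
qed

lemma tcomp_0_Suc: "tcomp t 0 (Suc i) x = tcomp t 1 i (t 0 x)"
  by (induction i) auto

context
  fixes R :: "nat \<Rightarrow> 'a ring" and t :: "nat \<Rightarrow> 'a \<Rightarrow> 'a"
  assumes R_cring: "\<And>i. cring (R i)" and t_hom: "\<And>i. t i \<in> ring_hom (R i) (R (Suc i))"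
begin

lemma tcomp_ring_hom_cring: "ring_hom_cring (R j) (R (j + n)) (tcomp t j n)"
  using R_cring tcomp_ring_hom[of t R j n, OF t_hom]
  by (simp add: ring_hom_cring_def ring_hom_cring_axioms_def)

lemma ext0_cgenideal:
  "f \<in> carrier (R 0) \<Longrightarrow> ext0 R t (PIdl\<^bsub>R 0\<^esub> f) i = PIdl\<^bsub>R i\<^esub> (tcomp t 0 i f)"
  unfolding ext0_def
  using genideal_image_cgenideal[OF R_cring R_cring tcomp_ring_hom[of t R 0 i, OF t_hom]] by simp

lemma ext1_cgenideal:
  "g \<in> carrier (R 1) \<Longrightarrow> ext1 R t (PIdl\<^bsub>R 1\<^esub> g) i = PIdl\<^bsub>R (Suc i)\<^esub> (tcomp t 1 i g)"
  unfolding ext1_def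
  using genideal_image_cgenideal[OF R_cring R_cring tcomp_ring_hom[of t R 1 i, OF t_hom]] by simp

lemma tcomp_cgenideal_pow_eq:
  assumes f: "f \<in> carrier (R 0)" and g: "g \<in> carrier (R 1)"
    and eq: "PIdl\<^bsub>R 1\<^esub> (g [^]\<^bsub>R 1\<^esub> (n::nat)) = PIdl\<^bsub>R 1\<^esub> (t 0 f)"
  shows "PIdl\<^bsub>R (Suc i)\<^esub> (tcomp t 1 i g [^]\<^bsub>R (Suc i)\<^esub> n) = PIdl\<^bsub>R (Suc i)\<^esub> (tcomp t 0 (Suc i) f)"
proof -
  interpret h: ring_hom_cring "R 1" "R (Suc i)" "tcomp t 1 i"
    using tcomp_ring_hom_cring[of 1 i] by simp
  have "PIdl\<^bsub>R (Suc i)\<^esub> (tcomp t 1 i (g [^]\<^bsub>R 1\<^esub> n))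
      = Idl\<^bsub>R (Suc i)\<^esub> (tcomp t 1 i ` (PIdl\<^bsub>R 1\<^esub> (g [^]\<^bsub>R 1\<^esub> n)))"
    using genideal_image_cgenideal[OF R_cring R_cring h.homh h.R.nat_pow_closed[OF g]] by simp
  also have "\<dots> = PIdl\<^bsub>R (Suc i)\<^esub> (tcomp t 1 i (t 0 f))"
    unfolding eq using genideal_image_cgenideal[OF R_cring R_cring h.homh] ring_hom_closed[OF t_hom f]
    by simp
  finally show ?thesis
    by (simp only: tcomp_0_Suc h.hom_pow[OF g])
qed

lemma ext0_idl_pow_cgenideal:
  assumes f: "f \<in> carrier (R 0)"
  shows "ext0 R t (idl_pow (R 0) (PIdl\<^bsub>R 0\<^esub> f) n) i = PIdl\<^bsub>R i\<^esub> (tcomp t 0 i f [^]\<^bsub>R i\<^esub> (n::nat))"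
proof -
  interpret h: ring_hom_cring "R 0" "R i" "tcomp t 0 i"
    using tcomp_ring_hom_cring[of 0 i] by simp
  show ?thesis
    using idl_pow_cgenideal[OF R_cring f] ext0_cgenideal[of "f [^]\<^bsub>R 0\<^esub> n" i] f by simp
qed

lemma tcomp_char_mem_cgenideal:
  assumes f: "f \<in> carrier (R 0)" and "add_pow (R 0) (p::nat) \<one>\<^bsub>R 0\<^esub> \<in> PIdl\<^bsub>R 0\<^esub> f"
  shows "add_pow (R i) p \<one>\<^bsub>R i\<^esub> \<in> PIdl\<^bsub>R i\<^esub> (tcomp t 0 i f)"
proof -
  interpret h: ring_hom_cring "R 0" "R i" "tcomp t 0 i"
    using tcomp_ring_hom_cring[of 0 i] by simp
  have "tcomp t 0 i (add_pow (R 0) p \<one>\<^bsub>R 0\<^esub>) = add_pow (R i) p \<one>\<^bsub>R i\<^esub>"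
    using ring_hom_add_pow[OF h.R.ring_axioms h.S.ring_axioms h.homh h.R.one_closed] by simp
  then show ?thesis
    using ring_hom_mem_cgenideal[OF h.homh f assms(2)] by simp
qed

lemma frob_rel_zero_iff:
  assumes "I \<subseteq> carrier (R 0)" "y \<in> carrier (R (Suc i))"
  shows "frob_rel p R t I i y \<zero>\<^bsub>R i\<^esub> \<longleftrightarrow> y [^]\<^bsub>R (Suc i)\<^esub> p \<in> ext0 R t I (Suc i)"
proof -
  interpret B: cring "R (Suc i)" by (rule R_cring)
  interpret h: ring_hom_cring "R i" "R (Suc i)" "t i"
    using tcomp_ring_hom_cring[of i 1] by (simp add: o_def)
  have "tcomp t 0 (Suc i) ` I \<subseteq> carrier (R (Suc i))"
    using assms(1) ring_hom_closed[OF tcomp_ring_hom[of t R 0 "Suc i", OF t_hom]] by auto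
  then interpret J: additive_subgroup "ext0 R t I (Suc i)" "R (Suc i)"
    unfolding ext0_def by (rule ideal.axioms(1)[OF B.genideal_ideal])
  have "t i \<zero>\<^bsub>R i\<^esub> \<ominus>\<^bsub>R (Suc i)\<^esub> y [^]\<^bsub>R (Suc i)\<^esub> p = \<ominus>\<^bsub>R (Suc i)\<^esub> (y [^]\<^bsub>R (Suc i)\<^esub> p)"
    using assms(2) by (simp add: B.minus_eq)
  then show ?thesis
    unfolding frob_rel_def using J.a_inv_closed[of "\<ominus>\<^bsub>R (Suc i)\<^esub> (y [^]\<^bsub>R (Suc i)\<^esub> p)"]
      J.a_inv_closed[of "y [^]\<^bsub>R (Suc i)\<^esub> p"] assms(2) by auto
qed

end

lemma preperfectoid_tower_principal:
  assumes "preperfectoid_tower p R t I0"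
  obtains f g Ftor where "f \<in> carrier (R 0)" "I0 = PIdl\<^bsub>R 0\<^esub> f"
    "principal_preperfectoid_tower p R t (\<lambda>i. tcomp t 0 i f) (\<lambda>i. tcomp t 1 i g) Ftor"
proof -
  note tower = assms[unfolded preperfectoid_tower_def purely_inseparable_tower_def]
  have prime: "Factorial_Ring.prime p" and R_cring: "\<And>i. cring (R i)"
    and t_hom: "\<And>i. t i \<in> ring_hom (R i) (R (Suc i))"
    using tower by blast+
  obtain f where f: "f \<in> carrier (R 0)" and I0: "I0 = PIdl\<^bsub>R 0\<^esub> f"
    using tower by blast
  have I0_carrier: "I0 \<subseteq> carrier (R 0)"
    using ideal.Icarr[of I0 "R 0"] tower by blast
  obtain I1 where I1_principal: "\<exists>g\<in>carrier (R 1). I1 = PIdl\<^bsub>R 1\<^esub> g"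
    and I1_pow: "idl_pow (R 1) I1 p = ext0 R t I0 1"
    and kernel: "\<forall>i. \<forall>y\<in>carrier (R (Suc i)).
      frob_rel p R t I0 i y \<zero>\<^bsub>R i\<^esub> \<longleftrightarrow> y \<in> ext1 R t I1 i <+>\<^bsub>R (Suc i)\<^esub> ext0 R t I0 (Suc i)"
    using tower by blast
  obtain g where g: "g \<in> carrier (R 1)" and I1: "I1 = PIdl\<^bsub>R 1\<^esub> g"
    using I1_principal by blast
  obtain Ftor where Ftor: "\<forall>i. bij_betw (Ftor i) (tor (R (Suc i)) (ext0 R t I0 (Suc i))) (tor (R i) (ext0 R t I0 i))
    \<and> (\<forall>y\<in>tor (R (Suc i)) (ext0 R t I0 (Suc i)). frob_rel p R t I0 i y (Ftor i y))"
    using tower by blast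
  define F where "F i = tcomp t 0 i f" for i
  define G where "G i = tcomp t 1 i g" for i
  have F_carrier: "F i \<in> carrier (R i)" for i
    unfolding F_def using ring_hom_closed[OF tcomp_ring_hom[of t R 0 i, OF t_hom] f] by simp
  have G_carrier: "G i \<in> carrier (R (Suc i))" for i
    unfolding G_def using ring_hom_closed[OF tcomp_ring_hom[of t R 1 i, OF t_hom] g] by simp
  have E0: "ext0 R t I0 i = PIdl\<^bsub>R i\<^esub> (F i)" for i
    unfolding I0 F_def by (rule ext0_cgenideal[OF R_cring t_hom f])
  have E1: "ext1 R t I1 i = PIdl\<^bsub>R (Suc i)\<^esub> (G i)" for i
    unfolding I1 G_def by (rule ext1_cgenideal[OF R_cring t_hom g])
  have tor_eq: "tor (R i) (PIdl\<^bsub>R i\<^esub> (F i)) = {x \<in> carrier (R i). F i \<otimes>\<^bsub>R i\<^esub> x = \<zero>\<^bsub>R i\<^esub>}" for i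
  proof (rule cring.tor_cgenideal_eq[OF R_cring F_carrier])
    have "f \<in> I0" using ring.cgenideal_self[OF cring.axioms(1)[OF R_cring] f] by (simp add: I0)
    then show "\<And>x. x \<in> tor (R i) (PIdl\<^bsub>R i\<^esub> (F i)) \<Longrightarrow> F i \<otimes>\<^bsub>R i\<^esub> x = \<zero>\<^bsub>R i\<^esub>"
      using tower E0 by (auto simp: F_def)
  qed
  show thesis
  proof (rule that[where g = g and Ftor = Ftor, OF f I0], fold F_def G_def,
      rule principal_preperfectoid_tower.intro)
    show "Factorial_Ring.prime p" by (rule prime)
    show "\<And>i. cring (R i)" by (rule R_cring)
    show "\<And>i. t i \<in> ring_hom (R i) (R (Suc i))" by (rule t_hom)
    show "\<And>i. F i \<in> carrier (R i)" by (rule F_carrier)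
    show "\<And>i. G i \<in> carrier (R (Suc i))" by (rule G_carrier)
    show "\<And>i. t i (F i) = F (Suc i)" by (simp add: F_def)
    show "\<And>i. t (Suc i) (G i) = G (Suc i)" by (simp add: G_def)
    show "\<And>i. add_pow (R i) p \<one>\<^bsub>R i\<^esub> \<in> PIdl\<^bsub>R i\<^esub> (F i)"
      using tcomp_char_mem_cgenideal[OF R_cring t_hom f] tower unfolding I0 F_def by blast
    show "\<And>i. PIdl\<^bsub>R (Suc i)\<^esub> (G i [^]\<^bsub>R (Suc i)\<^esub> p) = PIdl\<^bsub>R (Suc i)\<^esub> (F (Suc i))"
      using tcomp_cgenideal_pow_eq[OF R_cring t_hom f g] I1_pow E0[of 1]
        idl_pow_cgenideal[OF R_cring g] by (simp add: I1 F_def G_def)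
    show "\<And>i x. \<lbrakk>x \<in> carrier (R i); t i x \<in> PIdl\<^bsub>R (Suc i)\<^esub> (F (Suc i))\<rbrakk>
      \<Longrightarrow> x \<in> PIdl\<^bsub>R i\<^esub> (F i)"
      using tower unfolding E0 by blast
    show "\<And>i x. x \<in> carrier (R i) \<Longrightarrow> \<exists>y\<in>carrier (R (Suc i)).
      t i x \<ominus>\<^bsub>R (Suc i)\<^esub> y [^]\<^bsub>R (Suc i)\<^esub> p \<in> PIdl\<^bsub>R (Suc i)\<^esub> (F (Suc i))"
      using tower unfolding frob_rel_def E0 by blast
    show "\<And>i y. \<lbrakk>y \<in> carrier (R (Suc i)); y [^]\<^bsub>R (Suc i)\<^esub> p \<in> PIdl\<^bsub>R (Suc i)\<^esub> (F (Suc i))\<rbrakk>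
      \<Longrightarrow> y \<in> PIdl\<^bsub>R (Suc i)\<^esub> (G i) <+>\<^bsub>R (Suc i)\<^esub> PIdl\<^bsub>R (Suc i)\<^esub> (F (Suc i))"
      using kernel frob_rel_zero_iff[OF R_cring t_hom I0_carrier] unfolding E0 E1 by blast
    show "\<And>i x n. \<lbrakk>x \<in> carrier (R i); F i [^]\<^bsub>R i\<^esub> (n::nat) \<otimes>\<^bsub>R i\<^esub> x = \<zero>\<^bsub>R i\<^esub>\<rbrakk>
      \<Longrightarrow> F i \<otimes>\<^bsub>R i\<^esub> x = \<zero>\<^bsub>R i\<^esub>"
      using cring.tor_cgenideal_pow[OF R_cring F_carrier] tor_eq by blast
    show "\<And>i. bij_betw (Ftor i)
      {y \<in> carrier (R (Suc i)). F (Suc i) \<otimes>\<^bsub>R (Suc i)\<^esub> y = \<zero>\<^bsub>R (Suc i)\<^esub>}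
      {x \<in> carrier (R i). F i \<otimes>\<^bsub>R i\<^esub> x = \<zero>\<^bsub>R i\<^esub>}"
      using Ftor unfolding E0 tor_eq by blast
    show "\<And>i y. \<lbrakk>y \<in> carrier (R (Suc i)); F (Suc i) \<otimes>\<^bsub>R (Suc i)\<^esub> y = \<zero>\<^bsub>R (Suc i)\<^esub>\<rbrakk>
      \<Longrightarrow> t i (Ftor i y) \<ominus>\<^bsub>R (Suc i)\<^esub> y [^]\<^bsub>R (Suc i)\<^esub> p \<in> PIdl\<^bsub>R (Suc i)\<^esub> (F (Suc i))"
      using Ftor unfolding E0 tor_eq frob_rel_def by blast
  qed
qed

theorem corollary3p12:
  fixes p :: nat and R :: "nat \<Rightarrow> 'a ring" and t :: "nat \<Rightarrow> 'a \<Rightarrow> 'a" and I0 :: "'a set"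
  assumes "preperfectoid_tower p R t I0"
    and "\<forall>i. (\<Inter>n. ext0 R t (idl_pow (R 0) I0 n) i) = {\<zero>\<^bsub>R i\<^esub>}"
  shows "\<forall>i. inj_on (t i) (carrier (R i)) \<and>
             (\<forall>x\<in>carrier (R i). \<forall>n::nat. x [^]\<^bsub>R i\<^esub> n = \<zero>\<^bsub>R i\<^esub> \<longrightarrow> x = \<zero>\<^bsub>R i\<^esub>)"
proof -
  obtain f g Ftor where f: "f \<in> carrier (R 0)" and I0: "I0 = PIdl\<^bsub>R 0\<^esub> f"
    and tower: "principal_preperfectoid_tower p R t (\<lambda>i. tcomp t 0 i f) (\<lambda>i. tcomp t 1 i g) Ftor"
    using preperfectoid_tower_principal[OF assms(1)] by blast
  interpret principal_preperfectoid_tower p R t "\<lambda>i. tcomp t 0 i f" "\<lambda>i. tcomp t 1 i g" Ftor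
    by (rule tower)
  have separated: "separated i" for i
    using assms(2) ext0_idl_pow_cgenideal[OF R_cring t_hom f] by (simp add: separated_def I0)
  show ?thesis
    using t_inj_on[OF separated] nilpotent_eq_zero[OF separated separated] by blast
qed

end
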